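(* Let $A_1,\ldots,A_N$ be rank-deficient real matrices, each with columns of Euclidean norm $1$. Then \[ \mathrm{spark}(A_1\otimes\cdots\otimes A_N)=\min_{1\le i\le N}\mathrm{spark}(A_i). \]
   Context: $\otimes$ denotes the Kronecker product: for $A\in\mathbb{R}^{p,q}$, $B\in\mathbb{R}^{r,s}$, $A\otimes B\in\mathbb{R}^{pr,qs}$ is the block matrix with $(i,j)$ block $a_{i,j}B$. A matrix is rank-deficient if its rank is less than the minimum of its numbers of rows and columns. The spark of a matrix whose columns are linearly dependent is the smallest cardinality of a linearly dependent subset of its columns. *)

theory Defs
  imports "Jordan_Normal_Form.DL_Rank"
begin

definition kron :: "real mat \<Rightarrow> real mat \<Rightarrow> real mat" where
  "kron A B = mat (dim_row A * dim_row B) (dim_col A * dim_col B)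
     (\<lambda>(i, j). A $$ (i div dim_row B, j div dim_col B) * B $$ (i mod dim_row B, j mod dim_col B))"

fun kron_list :: "real mat list \<Rightarrow> real mat" where
  "kron_list [] = 1\<^sub>m 1"
| "kron_list [A] = A"
| "kron_list (A # B # As) = kron A (kron_list (B # As))"

text \<open>A set J of column indices is linearly dependent (columns indexed, so repeated columns count separately).\<close>
definition cols_dependent :: "real mat \<Rightarrow> nat set \<Rightarrow> bool" where
  "cols_dependent A J \<longleftrightarrow> J \<subseteq> {..<dim_col A} \<and>
     (\<exists>c :: nat \<Rightarrow> real. (\<exists>j\<in>J. c j \<noteq> 0) \<and>
        (\<forall>i<dim_row A. (\<Sum>j\<in>J. c j * A $$ (i, j)) = 0))"

definition spark :: "real mat \<Rightarrow> nat" where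
  "spark A = (LEAST k. \<exists>J. cols_dependent A J \<and> card J = k)"

definition rank_deficient :: "real mat \<Rightarrow> bool" where
  "rank_deficient A \<longleftrightarrow> vec_space.rank (dim_row A) A < min (dim_row A) (dim_col A)"

definition unit_norm_cols :: "real mat \<Rightarrow> bool" where
  "unit_norm_cols A \<longleftrightarrow> (\<forall>j<dim_col A. sqrt (\<Sum>i<dim_row A. (A $$ (i, j))\<^sup>2) = 1)"

end

theory Submission
  imports Defs
begin

text \<open>
  Index the columns of \<open>A \<otimes> B\<close> by pairs \<open>(j, k)\<close>. A vanishing combination with
  coefficients \<open>X j k\<close> is the identity \<open>A X B\<^sup>T = 0\<close>. If \<open>A X \<noteq> 0\<close>, a nonzero row of
  \<open>A X\<close> is a dependence among the columns of \<open>B\<close> whose support lies in the projection of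
  the support of \<open>X\<close>; if \<open>A X = 0\<close>, a nonzero column of \<open>X\<close> is a dependence among the
  columns of \<open>A\<close>. Either way the support of \<open>X\<close> has at least
  \<open>min (spark A) (spark B)\<close> elements. Conversely a minimal dependence of \<open>A\<close> (of \<open>B\<close>)
  lifts to one of \<open>A \<otimes> B\<close> by tensoring with a standard basis vector, so equality
  holds, and induction over the list of factors gives the theorem.
\<close>

lemma sum_lessThan_mult:
  fixes g :: "nat \<Rightarrow> 'a::comm_monoid_add"
  shows "(\<Sum>x<p * q. g x) = (\<Sum>j<p. \<Sum>k<q. g (j * q + k))"
  by (simp add: sum.nat_group[symmetric] sum.shift_bounds_nat_ivl[where m=0, simplified]
      atLeast0LessThan add.commute)

lemma spark_le_card: "cols_dependent A J \<Longrightarrow> spark A \<le> card J"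
  unfolding spark_def by (rule Least_le) blast

lemma spark_attained: "cols_dependent A J \<Longrightarrow> \<exists>J0. cols_dependent A J0 \<and> card J0 = spark A"
  unfolding spark_def by (rule LeastI_ex) blast

lemma cols_dependent_support:
  assumes null: "\<And>i. i < dim_row A \<Longrightarrow> (\<Sum>j<dim_col A. v j * A $$ (i, j)) = 0"
    and "j0 < dim_col A" "v j0 \<noteq> 0"
  shows "cols_dependent A {j. j < dim_col A \<and> v j \<noteq> 0}"
  unfolding cols_dependent_def
proof (intro conjI exI[of _ v] allI impI)
  fix i assume "i < dim_row A"
  have "(\<Sum>j\<in>{j. j < dim_col A \<and> v j \<noteq> 0}. v j * A $$ (i, j)) = (\<Sum>j<dim_col A. v j * A $$ (i, j))"
    by (intro sum.mono_neutral_left) auto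
  with null \<open>i < dim_row A\<close> show "(\<Sum>j\<in>{j. j < dim_col A \<and> v j \<noteq> 0}. v j * A $$ (i, j)) = 0"
    by simp
qed (use assms in auto)

lemma spark_le_card_support:
  assumes "\<And>i. i < dim_row A \<Longrightarrow> (\<Sum>j<dim_col A. v j * A $$ (i, j)) = 0"
    and "j0 < dim_col A" "v j0 \<noteq> 0"
  shows "spark A \<le> card {j. j < dim_col A \<and> v j \<noteq> 0}"
  using spark_le_card[OF cols_dependent_support[OF assms]] .

lemma cols_dependent_if_equal_cols:
  assumes "i < dim_col A" "j < dim_col A" "i \<noteq> j" "col A i = col A j"
  shows "cols_dependent A {i, j}"
  unfolding cols_dependent_def
proof (intro conjI exI[of _ "\<lambda>x. if x = i then 1 else -1"] allI impI)
  fix r assume "r < dim_row A"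
  then have "A $$ (r, i) = A $$ (r, j)"
    using assms by (metis col_def index_vec)
  then show "(\<Sum>x\<in>{i, j}. (if x = i then 1 else -1) * A $$ (r, x)) = 0"
    using assms(3) by simp
qed (use assms in auto)

lemma cols_dependent_if_rank_less:
  assumes "vec_space.rank (dim_row A) A < dim_col A"
  shows "\<exists>J. cols_dependent A J"
proof (cases "distinct (cols A)")
  case False
  then obtain i j where "i < dim_col A" "j < dim_col A" "i \<noteq> j" "col A i = col A j"
    by (metis cols_length cols_nth distinct_conv_nth)
  then show ?thesis using cols_dependent_if_equal_cols by blast
next
  case True
  interpret vec_space "TYPE(real)" "dim_row A" .
  have A: "A \<in> carrier_mat (dim_row A) (dim_col A)" by auto
  have "\<not> lin_indpt (set (cols A))"
    using lin_indpt_full_rank[OF A True] assms by auto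
  then obtain v where v: "v \<in> carrier_vec (dim_col A)" "v \<noteq> 0\<^sub>v (dim_col A)"
    "A *\<^sub>v v = 0\<^sub>v (dim_row A)"
    using lin_depE[OF A _ True] by blast
  obtain k where "k < dim_col A" "v $ k \<noteq> 0"
    using v(1,2) by (metis carrier_vecD eq_vecI index_zero_vec)
  moreover have "(\<Sum>j<dim_col A. v $ j * A $$ (i, j)) = 0" if "i < dim_row A" for i
  proof -
    have "(A *\<^sub>v v) $ i = 0" using v(3) that by simp
    then show ?thesis
      using that v(1) unfolding mult_mat_vec_def scalar_prod_def
      by (auto simp: atLeast0LessThan mult.commute intro: sum.cong)
  qed
  ultimately show ?thesis using cols_dependent_support by blast
qed

lemma rank_deficient_dim_col_pos: "rank_deficient A \<Longrightarrow> 0 < dim_col A"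
  unfolding rank_deficient_def by linarith

lemma rank_deficient_cols_dependent: "rank_deficient A \<Longrightarrow> \<exists>J. cols_dependent A J"
  unfolding rank_deficient_def by (rule cols_dependent_if_rank_less) linarith

lemma dim_kron [simp]:
  "dim_row (kron A B) = dim_row A * dim_row B"
  "dim_col (kron A B) = dim_col A * dim_col B"
  unfolding kron_def by auto

lemma index_kron:
  "i < dim_row A * dim_row B \<Longrightarrow> j < dim_col A * dim_col B \<Longrightarrow>
   kron A B $$ (i, j) = A $$ (i div dim_row B, j div dim_col B) * B $$ (i mod dim_row B, j mod dim_col B)"
  unfolding kron_def by auto

lemma mult_add_less_mult:
  fixes r s m n :: nat
  assumes "r < m" "s < n"
  shows "r * n + s < m * n"
proof -
  have "r * n + s < Suc r * n" using assms(2) by simp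
  also have "\<dots> \<le> m * n" using assms(1) by (intro mult_right_mono) auto
  finally show ?thesis .
qed

lemma index_kron_block:
  assumes "r < dim_row A" "s < dim_row B" "j < dim_col A" "k < dim_col B"
  shows "kron A B $$ (r * dim_row B + s, j * dim_col B + k) = A $$ (r, j) * B $$ (s, k)"
  using assms by (simp add: index_kron mult_add_less_mult)

lemma cols_dependent_kron_left:
  assumes "cols_dependent A J" "0 < dim_col B"
  shows "cols_dependent (kron A B) ((\<lambda>j. j * dim_col B) ` J)"
proof -
  let ?q = "dim_col B"
  from assms(1) obtain c where J: "J \<subseteq> {..<dim_col A}" "\<exists>j\<in>J. c j \<noteq> 0"
    and null: "\<And>r. r < dim_row A \<Longrightarrow> (\<Sum>j\<in>J. c j * A $$ (r, j)) = 0"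
    unfolding cols_dependent_def by blast
  have inj: "inj_on (\<lambda>j. j * ?q) J" using assms(2) by (auto simp: inj_on_def)
  show ?thesis unfolding cols_dependent_def
  proof (intro conjI exI[of _ "\<lambda>x. c (x div ?q)"] allI impI)
    fix i assume i: "i < dim_row (kron A B)"
    then have "i div dim_row B < dim_row A" by (simp add: less_mult_imp_div_less)
    moreover have "kron A B $$ (i, j * ?q) = A $$ (i div dim_row B, j) * B $$ (i mod dim_row B, 0)"
      if "j \<in> J" for j
      using that J(1) i assms(2) by (auto simp: index_kron)
    ultimately have "(\<Sum>x\<in>(\<lambda>j. j * ?q) ` J. c (x div ?q) * kron A B $$ (i, x))
        = (\<Sum>j\<in>J. c j * A $$ (i div dim_row B, j)) * B $$ (i mod dim_row B, 0)"
      using inj assms(2) by (simp add: sum.reindex sum_distrib_right mult.assoc)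
    with null \<open>i div dim_row B < dim_row A\<close>
    show "(\<Sum>x\<in>(\<lambda>j. j * ?q) ` J. c (x div ?q) * kron A B $$ (i, x)) = 0"
      by simp
  qed (use J assms(2) in auto)
qed

lemma cols_dependent_kron_right:
  assumes "cols_dependent B K" "0 < dim_col A"
  shows "cols_dependent (kron A B) K"
proof -
  from assms(1) obtain c where K: "K \<subseteq> {..<dim_col B}" "\<exists>k\<in>K. c k \<noteq> 0"
    and null: "\<And>s. s < dim_row B \<Longrightarrow> (\<Sum>k\<in>K. c k * B $$ (s, k)) = 0"
    unfolding cols_dependent_def by blast
  show ?thesis unfolding cols_dependent_def
  proof (intro conjI exI[of _ c] allI impI)
    fix i assume i: "i < dim_row (kron A B)"
    then have "i mod dim_row B < dim_row B" by (cases "dim_row B = 0") auto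
    moreover have "kron A B $$ (i, k) = A $$ (i div dim_row B, 0) * B $$ (i mod dim_row B, k)"
      if "k \<in> K" for k
    proof -
      have "k < dim_col B" using that K(1) by auto
      moreover have "dim_col B \<le> dim_col A * dim_col B" using assms(2) by simp
      ultimately have "k < dim_col A * dim_col B" by (rule less_le_trans)
      with \<open>k < dim_col B\<close> i show ?thesis by (simp add: index_kron)
    qed
    ultimately have "(\<Sum>k\<in>K. c k * kron A B $$ (i, k))
        = A $$ (i div dim_row B, 0) * (\<Sum>k\<in>K. c k * B $$ (i mod dim_row B, k))"
      by (simp add: sum_distrib_left mult.left_commute)
    with null \<open>i mod dim_row B < dim_row B\<close> show "(\<Sum>k\<in>K. c k * kron A B $$ (i, k)) = 0"
      by simp
  qed (use K assms(2) in \<open>auto intro: less_le_trans\<close>)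
qed

lemma min_spark_le_card_support:
  fixes A B :: "real mat" and X :: "nat \<Rightarrow> nat \<Rightarrow> real"
  defines "p \<equiv> dim_col A" and "q \<equiv> dim_col B"
  assumes null: "\<And>r s. r < dim_row A \<Longrightarrow> s < dim_row B \<Longrightarrow>
      (\<Sum>j<p. \<Sum>k<q. X j k * A $$ (r, j) * B $$ (s, k)) = 0"
    and nonzero: "j0 < p" "k0 < q" "X j0 k0 \<noteq> 0"
  shows "min (spark A) (spark B) \<le> card {(j, k). j < p \<and> k < q \<and> X j k \<noteq> 0}"
proof -
  let ?supp = "{(j, k). j < p \<and> k < q \<and> X j k \<noteq> 0}"
  have fin: "finite ?supp"
    by (rule finite_subset[of _ "{..<p} \<times> {..<q}"]) auto
  define Y where "Y r k = (\<Sum>j<p. X j k * A $$ (r, j))" for r k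
  show ?thesis
  proof (cases "\<exists>r<dim_row A. \<exists>k<q. Y r k \<noteq> 0")
    case True
    then obtain r k1 where r: "r < dim_row A" and "k1 < q" "Y r k1 \<noteq> 0" by blast
    have "(\<Sum>k<q. Y r k * B $$ (s, k)) = 0" if "s < dim_row B" for s
      using null[OF r that] unfolding Y_def
      by (simp add: sum_distrib_right sum.swap[where A = "{..<q}"])
    then have "spark B \<le> card {k. k < q \<and> Y r k \<noteq> 0}"
      using spark_le_card_support \<open>k1 < q\<close> \<open>Y r k1 \<noteq> 0\<close> unfolding q_def by blast
    also have "\<dots> \<le> card (snd ` ?supp)"
    proof (rule card_mono)
      show "{k. k < q \<and> Y r k \<noteq> 0} \<subseteq> snd ` ?supp"
      proof
        fix k assume "k \<in> {k. k < q \<and> Y r k \<noteq> 0}"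
        then obtain j where "j < p" "X j k \<noteq> 0" "k < q"
          unfolding Y_def by (force elim: sum.not_neutral_contains_not_neutral)
        then show "k \<in> snd ` ?supp" by force
      qed
    qed (use fin in simp)
    also have "\<dots> \<le> card ?supp" using fin by (rule card_image_le)
    finally show ?thesis by simp
  next
    case False
    then have "\<And>r. r < dim_row A \<Longrightarrow> (\<Sum>j<p. X j k0 * A $$ (r, j)) = 0"
      using nonzero(2) unfolding Y_def by blast
    then have "spark A \<le> card {j. j < p \<and> X j k0 \<noteq> 0}"
      using spark_le_card_support[of A "\<lambda>j. X j k0"] nonzero(1,3) unfolding p_def by blast
    also have "\<dots> = card ((\<lambda>j. (j, k0)) ` {j. j < p \<and> X j k0 \<noteq> 0})"
      by (rule card_image[symmetric]) (auto simp: inj_on_def)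
    also have "\<dots> \<le> card ?supp"
      using fin nonzero(2) by (intro card_mono) auto
    finally show ?thesis by simp
  qed
qed

lemma min_spark_le_card_kron_dependent:
  assumes "0 < dim_col B" and "cols_dependent (kron A B) J"
  shows "min (spark A) (spark B) \<le> card J"
proof -
  define p q where "p = dim_col A" and "q = dim_col B"
  from assms(2) obtain c x0 where J: "J \<subseteq> {..<p * q}" and x0: "x0 \<in> J" "c x0 \<noteq> 0"
    and null: "\<And>i. i < dim_row A * dim_row B \<Longrightarrow> (\<Sum>x\<in>J. c x * kron A B $$ (i, x)) = 0"
    unfolding cols_dependent_def p_def q_def by auto
  have "finite J" using J by (rule finite_subset) simp
  \<comment> \<open>the coefficient of column \<open>j * q + k\<close>, i.e. of \<open>col A j \<otimes> col B k\<close>\<close>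
  define X where "X j k = (if j * q + k \<in> J then c (j * q + k) else 0)" for j k
  have "(\<Sum>j<p. \<Sum>k<q. X j k * A $$ (r, j) * B $$ (s, k)) = 0"
    if r: "r < dim_row A" and s: "s < dim_row B" for r s
  proof -
    have "(\<Sum>j<p. \<Sum>k<q. X j k * A $$ (r, j) * B $$ (s, k))
        = (\<Sum>j<p. \<Sum>k<q. X j k * kron A B $$ (r * dim_row B + s, j * q + k))"
      using r s by (simp add: index_kron_block p_def q_def mult.assoc)
    also have "\<dots> = (\<Sum>x<p * q. (if x \<in> J then c x else 0) * kron A B $$ (r * dim_row B + s, x))"
      by (simp add: sum_lessThan_mult X_def)
    also have "\<dots> = (\<Sum>x\<in>J. c x * kron A B $$ (r * dim_row B + s, x))"
      using J by (intro sum.mono_neutral_cong_right) auto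
    also have "\<dots> = 0" using null r s by (simp add: mult_add_less_mult)
    finally show ?thesis .
  qed
  moreover have "x0 div q < p" "x0 mod q < q" "X (x0 div q) (x0 mod q) \<noteq> 0"
    using x0 J assms(1) by (auto simp: X_def q_def less_mult_imp_div_less)
  ultimately have "min (spark A) (spark B) \<le> card {(j, k). j < p \<and> k < q \<and> X j k \<noteq> 0}"
    unfolding p_def q_def by (rule min_spark_le_card_support)
  also have "\<dots> \<le> card ((\<lambda>x. (x div q, x mod q)) ` J)"
    using \<open>finite J\<close>
    by (intro card_mono) (auto simp: X_def split: if_splits intro!: image_eqI[of _ _ "_ * q + _"])
  also have "\<dots> \<le> card J"
    using \<open>finite J\<close> by (rule card_image_le)
  finally show ?thesis .
qed

lemma spark_kron:
  assumes "0 < dim_col A" "0 < dim_col B" "cols_dependent A J" "cols_dependent B K"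
  shows "spark (kron A B) = min (spark A) (spark B)"
proof (rule antisym)
  obtain JA where JA: "cols_dependent A JA" "card JA = spark A"
    using spark_attained[OF assms(3)] by blast
  obtain KB where KB: "cols_dependent B KB" "card KB = spark B"
    using spark_attained[OF assms(4)] by blast
  have "card ((\<lambda>j. j * dim_col B) ` JA) = card JA"
    using assms(2) by (intro card_image) (auto simp: inj_on_def)
  then have "spark (kron A B) \<le> spark A"
    using spark_le_card[OF cols_dependent_kron_left[OF JA(1) assms(2)]] JA(2) by simp
  moreover have "spark (kron A B) \<le> spark B"
    using spark_le_card[OF cols_dependent_kron_right[OF KB(1) assms(1)]] KB(2) by simp
  ultimately show "spark (kron A B) \<le> min (spark A) (spark B)" by simp
  obtain L where "cols_dependent (kron A B) L" "card L = spark (kron A B)"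
    using spark_attained[OF cols_dependent_kron_right[OF KB(1) assms(1)]] by blast
  then show "min (spark A) (spark B) \<le> spark (kron A B)"
    using min_spark_le_card_kron_dependent[OF assms(2)] by metis
qed

lemma dim_col_kron_list_pos:
  "\<forall>A\<in>set As. 0 < dim_col A \<Longrightarrow> 0 < dim_col (kron_list As)"
  by (induction As rule: kron_list.induct) auto

lemma spark_kron_list:
  assumes "As \<noteq> []" "\<forall>A\<in>set As. 0 < dim_col A \<and> (\<exists>J. cols_dependent A J)"
  shows "(\<exists>J. cols_dependent (kron_list As) J) \<and> spark (kron_list As) = Min (spark ` set As)"
  using assms
proof (induction As rule: kron_list.induct)
  case (3 A B As)
  then obtain J K where J: "cols_dependent A J" and K: "cols_dependent (kron_list (B # As)) K"
    and IH: "spark (kron_list (B # As)) = Min (spark ` set (B # As))" by auto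
  have "0 < dim_col A" "0 < dim_col (kron_list (B # As))"
    using "3.prems"(2) dim_col_kron_list_pos[of "B # As"] by auto
  then have eq: "spark (kron A (kron_list (B # As))) = min (spark A) (spark (kron_list (B # As)))"
    and dep: "cols_dependent (kron A (kron_list (B # As))) K"
    using spark_kron[OF _ _ J K] cols_dependent_kron_right[OF K] by auto
  show ?case
  proof
    show "\<exists>J. cols_dependent (kron_list (A # B # As)) J" using dep by auto
    show "spark (kron_list (A # B # As)) = Min (spark ` set (A # B # As))" using eq IH by simp
  qed
next
  case (2 A)
  then show ?case by auto
qed simp

theorem corollary3p2:
  fixes As :: "real mat list"
  assumes "As \<noteq> []"
    and "\<forall>A\<in>set As. rank_deficient A"
    and "\<forall>A\<in>set As. unit_norm_cols A"
  shows "spark (kron_list As) = Min (spark ` set As)"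
proof -
  have "\<forall>A\<in>set As. 0 < dim_col A \<and> (\<exists>J. cols_dependent A J)"
    using assms(2) by (simp add: rank_deficient_dim_col_pos rank_deficient_cols_dependent)
  from conjunct2[OF spark_kron_list[OF assms(1) this]] show ?thesis .
qed

end
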